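(* Let $n$ be a positive integer. The set $\{P_1,\dots,P_{(n-1)^2},C_1,\dots,C_n\}$ is a basis for the set $\Gamma_n$ of $n\times n$ stochastic matrices, i.e., it consists of $n^2-n+1$ linearly independent stochastic matrices whose linear span contains $\Gamma_n$.
   Context: A real $n\times n$ matrix is stochastic if its entries are nonnegative and each row sums to $1$; $\Gamma_n$ is the set of such matrices (an affine set of dimension $n(n-1)$). Let $l=n-1$. Numbering of positions: for an $l\times l$ matrix, position $(i,j)$ is assigned the number $i+(j-i)l\pmod{l^2}$, taken in $\{1,\dots,l^2\}$. For $1\le i\le l^2$, $A_i\in M_l$ is the $(0,1)$-matrix whose entries are $0$ except those in positions numbered $i,i+1,\dots,i+l-2\pmod{l^2}$, which are $1$. For $1\le i\le (n-1)^2$, $P_i$ is the unique $n\times n$ permutation matrix such that deleting its first row and first column yields $A_i$. For $j\in[n]$, $C_j$ is the $n\times n$ $(0,1)$-matrix whose $j$-th column is all $1$'s and all other entries $0$. *)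

theory Defs
  imports Complex_Main
begin

text \<open>Matrices are functions nat \<Rightarrow> nat \<Rightarrow> real, indexed 1-based by rows and columns;
  an n \<times> n matrix is required to vanish outside {1..n} \<times> {1..n}.\<close>

definition is_matrix :: "nat \<Rightarrow> (nat \<Rightarrow> nat \<Rightarrow> real) \<Rightarrow> bool" where
  "is_matrix n M \<longleftrightarrow> (\<forall>i j. (i \<notin> {1..n} \<or> j \<notin> {1..n}) \<longrightarrow> M i j = 0)"

definition stochastic :: "nat \<Rightarrow> (nat \<Rightarrow> nat \<Rightarrow> real) \<Rightarrow> bool" where
  "stochastic n M \<longleftrightarrow> is_matrix n M \<and>
     (\<forall>i\<in>{1..n}. \<forall>j\<in>{1..n}. M i j \<ge> 0) \<and> (\<forall>i\<in>{1..n}. (\<Sum>j=1..n. M i j) = 1)"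

definition Gamma :: "nat \<Rightarrow> (nat \<Rightarrow> nat \<Rightarrow> real) set" where
  "Gamma n = {M. stochastic n M}"

definition perm_matrix :: "nat \<Rightarrow> (nat \<Rightarrow> nat \<Rightarrow> real) \<Rightarrow> bool" where
  "perm_matrix n M \<longleftrightarrow> (\<exists>\<sigma>. bij_betw \<sigma> {1..n} {1..n} \<and>
     (\<forall>i j. M i j = (if i \<in> {1..n} \<and> j = \<sigma> i then 1 else 0)))"

text \<open>Number of position (i,j) of an l \<times> l matrix: i + (j - i) l mod l^2, taken in {1..l^2}.\<close>
definition pos_num :: "nat \<Rightarrow> nat \<Rightarrow> nat \<Rightarrow> int" where
  "pos_num l i j = (let k = (int i + (int j - int i) * int l) mod (int l ^ 2)
                    in if k = 0 then int l ^ 2 else k)"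

definition Amat :: "nat \<Rightarrow> nat \<Rightarrow> (nat \<Rightarrow> nat \<Rightarrow> real)" where
  "Amat l i r s = (if r \<in> {1..l} \<and> s \<in> {1..l} \<and>
       (\<exists>t. t + 1 < l \<and> (int i + int t) mod (int l ^ 2) = pos_num l r s mod (int l ^ 2))
     then 1 else 0)"

definition Pmat :: "nat \<Rightarrow> nat \<Rightarrow> (nat \<Rightarrow> nat \<Rightarrow> real)" where
  "Pmat n i = (THE M. perm_matrix n M \<and>
      (\<forall>r\<in>{1..n-1}. \<forall>s\<in>{1..n-1}. M (r+1) (s+1) = Amat (n-1) i r s))"

definition Cmat :: "nat \<Rightarrow> nat \<Rightarrow> (nat \<Rightarrow> nat \<Rightarrow> real)" where
  "Cmat n j r s = (if r \<in> {1..n} \<and> s = j then 1 else 0)"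

end

(* Deleting the first row and column of P_i leaves A_i, whose ones occupy the l - 1 consecutive
   positions i, ..., i + l - 2 (where l = n - 1). Consecutive positions lie in distinct rows and
   distinct columns, so A_i is a partial permutation matrix with one empty row; hence P_i exists,
   is unique, and P_i(1,1) = 0.
   If a combination of the P_i and C_j vanishes, summing column s gives sum a + n b_s = 0 and the
   entry (1,1) gives b_1 = 0, so all b_j and sum a vanish. In the lower right block, position q is
   covered exactly by A_(q-l+2), ..., A_q, so every cyclic window sum of length l - 1 of a vanishes.
   Then a is invariant under the shift by l - 1 modulo l^2, which is coprime to l^2, so a is
   constant, hence zero.
   Finally, Gamma_n lies in the span of the n^2 - n + 1 matrices C_1 and E_rs - E_r1 (s > 1), so the
   n^2 - n + 1 independent matrices P_i, C_j span it as well. *)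

theory Submission
  imports Defs "HOL-Library.Function_Algebras"
begin

section \<open>Positions and cells of the grid\<close>

(* The position numbered p + 1 lies in row p mod L (0-based); as p = x + (y - x) L modulo L^2,
   its column y is p mod L + p div L modulo L. *)
definition grid_col :: "int \<Rightarrow> int \<Rightarrow> int" where
  "grid_col L p = (p mod L + p div L) mod L"

lemma pos_num_mod:
  "pos_num l r s mod (int l ^ 2) = (int r + (int s - int r) * int l) mod (int l ^ 2)"
  unfolding pos_num_def Let_def by auto

lemma position_cell_iff:
  fixes L r s p :: int
  assumes L: "L \<ge> 1" and r: "1 \<le> r" "r \<le> L" and s: "1 \<le> s" "s \<le> L"
  shows "(p + 1) mod L^2 = (r + (s - r) * L) mod L^2 \<longleftrightarrow> p mod L = r - 1 \<and> grid_col L p = s - 1"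
proof
  assume "(p + 1) mod L^2 = (r + (s - r) * L) mod L^2"
  then obtain k where "(p + 1) - (r + (s - r) * L) = L^2 * k"
    by (metis dvd_def mod_eq_dvd_iff)
  then have p: "p = (r - 1) + (s - r + k * L) * L" by (simp add: algebra_simps power2_eq_square)
  have row: "p mod L = r - 1" unfolding p using L r by simp
  have "p div L = s - r + k * L" unfolding p using L r by simp
  then have "grid_col L p = ((s - 1) + k * L) mod L" unfolding grid_col_def row by (simp add: algebra_simps)
  then show "p mod L = r - 1 \<and> grid_col L p = s - 1" using row L s by simp
next
  assume cell: "p mod L = r - 1 \<and> grid_col L p = s - 1"
  define k where "k = (r - 1 + p div L) div L"
  have p: "p = L * (p div L) + (r - 1)" using cell by (metis div_mult_mod_eq mult.commute)
  have "r - 1 + p div L = L * k + (s - 1)"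
    using cell unfolding grid_col_def k_def by (metis div_mult_mod_eq mult.commute)
  then have "p div L = L * k + (s - r)" by linarith
  then have "L * (p div L) = L * (L * k + (s - r))" by simp
  then have "p + 1 = L * (L * k + (s - r)) + r" using p by linarith
  then have "p + 1 = (r + (s - r) * L) + L^2 * k" by (simp add: algebra_simps power2_eq_square)
  then show "(p + 1) mod L^2 = (r + (s - r) * L) mod L^2" by simp
qed

(* Going from u + t to u + t' adds t' - t to p mod L + p div L, minus L - 1 if a multiple of L
   is crossed; L divides neither increment. *)
lemma grid_col_window_inj:
  fixes L u t t' :: int
  assumes L: "L \<ge> 1" and t: "0 \<le> t" "t < t'" "t' \<le> L - 2"
  shows "grid_col L (u + t) \<noteq> grid_col L (u + t')"
proof
  assume eq: "grid_col L (u + t) = grid_col L (u + t')"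
  define D where "D = (u + t') div L - (u + t) div L"
  have "0 \<le> D" unfolding D_def using t L by (simp add: zdiv_mono1)
  moreover have "(u + t') div L \<le> (u + t + L) div L" by (rule zdiv_mono1) (use t L in auto)
  then have "D \<le> 1" unfolding D_def using L by simp
  ultimately have D: "D = 0 \<or> D = 1" by linarith
  have h: "p mod L + p div L = p - (L - 1) * (p div L)" for p
    by (simp add: algebra_simps minus_div_mult_eq_mod[symmetric])
  have "L dvd (u + t' - (L - 1) * ((u + t') div L)) - (u + t - (L - 1) * ((u + t) div L))"
    using eq[symmetric] unfolding grid_col_def h by (simp add: mod_eq_dvd_iff)
  moreover have "(u + t' - (L - 1) * ((u + t') div L)) - (u + t - (L - 1) * ((u + t) div L))
      = (t' - t) - (L - 1) * D"
    unfolding D_def by (simp add: algebra_simps)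
  ultimately have "L dvd (t' - t) - (L - 1) * D" by simp
  then have "L dvd t' - t \<or> L dvd (t' - t + 1) - L" using D by (auto simp: algebra_simps)
  then have "L dvd t' - t \<or> L dvd t' - t + 1" using dvd_diff_left_iff[of L L] by auto
  then have "L \<le> t' - t \<or> L \<le> t' - t + 1" using t by (auto dest: zdvd_imp_le)
  then show False using t by linarith
qed

lemma add_mod_eq_iff:
  fixes L u x t :: int
  assumes "0 \<le> x" "x < L" "0 \<le> t" "t < L"
  shows "(u + t) mod L = x \<longleftrightarrow> t = (x - u) mod L"
proof
  assume "(u + t) mod L = x"
  then have "(x - u) mod L = ((u + t) mod L - u) mod L" by simp
  also have "\<dots> = t" using assms by (simp add: mod_diff_left_eq)
  finally show "t = (x - u) mod L" by simp
next
  assume "t = (x - u) mod L"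
  then have "(u + t) mod L = (u + (x - u)) mod L" by (simp add: mod_add_right_eq)
  then show "(u + t) mod L = x" using assms by simp
qed

lemma pos_num_surj:
  assumes l: "l \<ge> 1"
  shows "\<exists>r\<in>{1..l}. \<exists>s\<in>{1..l}. pos_num l r s mod (int l ^ 2) = q mod (int l ^ 2)"
proof -
  define L where "L = int l"
  have L: "L \<ge> 1" using l unfolding L_def by simp
  define r where "r = nat ((q - 1) mod L) + 1"
  define s where "s = nat (grid_col L (q - 1)) + 1"
  have ri: "int r = (q - 1) mod L + 1" unfolding r_def using L by simp
  have si: "int s = grid_col L (q - 1) + 1" unfolding s_def grid_col_def using L by simp
  have "0 \<le> grid_col L (q - 1)" "grid_col L (q - 1) < L" unfolding grid_col_def using L by simp_all
  moreover have "0 \<le> (q - 1) mod L" "(q - 1) mod L < L" using L by simp_all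
  ultimately have "1 \<le> r" "r \<le> l" "1 \<le> s" "s \<le> l" using ri si unfolding L_def by linarith+
  then have rs: "r \<in> {1..l}" "s \<in> {1..l}" by simp_all
  have "(q - 1 + 1) mod L^2 = (int r + (int s - int r) * L) mod L^2"
    using position_cell_iff[of L "int r" "int s" "q - 1"] L rs ri si unfolding L_def by auto
  then have "pos_num l r s mod (int l ^ 2) = q mod (int l ^ 2)"
    unfolding pos_num_mod L_def by simp
  then show ?thesis using rs by blast
qed

section \<open>The matrices A_i\<close>

(* Row x (0-based) meets the positions i, ..., i + l - 2 of A_i at most at position
   i + amat_offset l i x, namely when this offset is below l - 1. *)
definition amat_offset :: "nat \<Rightarrow> nat \<Rightarrow> int \<Rightarrow> int" where
  "amat_offset l i x = (x - (int i - 1)) mod int l"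

definition amat_col :: "nat \<Rightarrow> nat \<Rightarrow> int \<Rightarrow> int" where
  "amat_col l i x = grid_col (int l) (int i - 1 + amat_offset l i x)"

lemma amat_offset_bounds: "l \<ge> 1 \<Longrightarrow> 0 \<le> amat_offset l i x \<and> amat_offset l i x < int l"
  unfolding amat_offset_def by simp

lemma amat_col_bounds: "l \<ge> 1 \<Longrightarrow> 0 \<le> amat_col l i x \<and> amat_col l i x < int l"
  unfolding amat_col_def grid_col_def by simp

lemma amat_offset_inj:
  assumes "l \<ge> 1" "0 \<le> x" "x < int l" "0 \<le> y" "y < int l"
    and "amat_offset l i x = amat_offset l i y"
  shows "x = y"
  using assms add_mod_eq_iff[of x "int l" "amat_offset l i x" "int i - 1"]
    add_mod_eq_iff[of y "int l" "amat_offset l i y" "int i - 1"] amat_offset_bounds[of l i]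
  unfolding amat_offset_def by metis

lemma amat_col_inj:
  assumes l: "l \<ge> 1" and x: "0 \<le> x" "x < int l" and y: "0 \<le> y" "y < int l"
    and offsets: "amat_offset l i x < int l - 1" "amat_offset l i y < int l - 1"
    and eq: "amat_col l i x = amat_col l i y"
  shows "x = y"
proof (rule amat_offset_inj[OF l x y], rule ccontr)
  assume "amat_offset l i x \<noteq> amat_offset l i y"
  then consider "amat_offset l i x < amat_offset l i y" | "amat_offset l i y < amat_offset l i x" by linarith
  then show False
    using grid_col_window_inj[of "int l" "amat_offset l i x" "amat_offset l i y" "int i - 1"]
      grid_col_window_inj[of "int l" "amat_offset l i y" "amat_offset l i x" "int i - 1"]
      amat_offset_bounds[OF l, of i x] amat_offset_bounds[OF l, of i y] offsets eq l
    unfolding amat_col_def by cases auto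
qed

lemma Amat_eq:
  assumes l: "l \<ge> 1" and r: "r \<in> {1..l}" and s: "s \<in> {1..l}"
  shows "Amat l i r s =
    (if amat_offset l i (int r - 1) < int l - 1 \<and> amat_col l i (int r - 1) = int s - 1 then 1 else 0)"
proof -
  define t0 where "t0 = amat_offset l i (int r - 1)"
  have t0: "0 \<le> t0" "t0 < int l" using amat_offset_bounds[OF l] unfolding t0_def by auto
  have "(int i + int t) mod (int l ^ 2) = pos_num l r s mod (int l ^ 2) \<longleftrightarrow>
      int t = t0 \<and> grid_col (int l) (int i - 1 + int t) = int s - 1" if "t < l" for t
    using position_cell_iff[of "int l" "int r" "int s" "int i - 1 + int t"]
      add_mod_eq_iff[of "int r - 1" "int l" "int t" "int i - 1"] l r s that
    unfolding pos_num_mod t0_def amat_offset_def by (auto simp: algebra_simps)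
  then have "(\<exists>t. t + 1 < l \<and> (int i + int t) mod (int l ^ 2) = pos_num l r s mod (int l ^ 2))
      \<longleftrightarrow> (\<exists>t. t + 1 < l \<and> int t = t0 \<and> grid_col (int l) (int i - 1 + int t) = int s - 1)"
    by (metis Suc_eq_plus1 Suc_lessD)
  also have "\<dots> \<longleftrightarrow> t0 < int l - 1 \<and> grid_col (int l) (int i - 1 + t0) = int s - 1"
    using t0 by (auto intro!: exI[of _ "nat t0"])
  finally show ?thesis unfolding Amat_def amat_col_def t0_def using r s by simp
qed

lemma Amat_partial_perm:
  assumes l: "l \<ge> 1"
  shows "\<exists>f. inj_on f {2..l+1} \<and> f ` {2..l+1} \<subseteq> {1..l+1}
    \<and> (\<forall>r\<in>{1..l}. \<forall>s\<in>{1..l}. Amat l i r s = (if f (r + 1) = s + 1 then 1 else 0))"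
proof -
  define f where "f r =
    (if amat_offset l i (int r - 2) < int l - 1 then nat (amat_col l i (int r - 2)) + 2 else 1)" for r
  have offset: "0 \<le> amat_offset l i x" "amat_offset l i x < int l" for x using amat_offset_bounds[OF l] by auto
  have col: "0 \<le> amat_col l i x" "amat_col l i x < int l" for x using amat_col_bounds[OF l] by auto
  have "inj_on f {2..l+1}"
  proof (rule inj_onI)
    fix r r' assume r: "r \<in> {2..l+1}" and r': "r' \<in> {2..l+1}" and eq: "f r = f r'"
    have "int r - 2 = int r' - 2"
    proof (cases "amat_offset l i (int r - 2) < int l - 1"; cases "amat_offset l i (int r' - 2) < int l - 1")
      assume "amat_offset l i (int r - 2) < int l - 1" "amat_offset l i (int r' - 2) < int l - 1"
      moreover have "amat_col l i (int r - 2) = amat_col l i (int r' - 2)"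
        using eq col(1) calculation by (simp add: f_def eq_nat_nat_iff)
      ultimately show ?thesis using amat_col_inj[OF l] r r' by auto
    next
      assume "\<not> amat_offset l i (int r - 2) < int l - 1" "\<not> amat_offset l i (int r' - 2) < int l - 1"
      then have "amat_offset l i (int r - 2) = amat_offset l i (int r' - 2)"
        using offset[of "int r - 2"] offset[of "int r' - 2"] by linarith
      then show ?thesis using amat_offset_inj[OF l] r r' by auto
    qed (use eq in \<open>auto simp: f_def\<close>)
    then show "r = r'" by simp
  qed
  moreover have "f r \<in> {1..l+1}" for r
  proof -
    have "nat (amat_col l i (int r - 2)) < l" using col[of "int r - 2"] by (simp add: nat_less_iff)
    then show ?thesis unfolding f_def by simp
  qed
  then have "f ` {2..l+1} \<subseteq> {1..l+1}" by auto
  moreover have "Amat l i r s = (if f (r + 1) = s + 1 then 1 else 0)" if "r \<in> {1..l}" "s \<in> {1..l}" for r s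
    using Amat_eq[OF l that, of i] col[of "int r - 1"] that unfolding f_def by (auto simp: algebra_simps)
  ultimately show ?thesis by blast
qed

lemma Amat_zero_row:
  assumes l: "l \<ge> 1"
  shows "\<exists>r\<in>{1..l}. \<forall>s\<in>{1..l}. Amat l i r s = 0"
proof -
  define x where "x = (int i - 2) mod int l"
  have x: "0 \<le> x" "x < int l" unfolding x_def using l by simp_all
  have "amat_offset l i x = (- 1) mod int l"
    unfolding amat_offset_def x_def mod_diff_left_eq[of "int i - 2" "int l" "int i - 1"] by simp
  also have "\<dots> = int l - 1" using l by (simp add: zmod_minus1)
  finally have "\<not> amat_offset l i (int (nat x + 1) - 1) < int l - 1" using x by simp
  then show ?thesis using Amat_eq[OF l] x by (intro bexI[of _ "nat x + 1"]) auto
qed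

lemma ex_shift_mod_iff:
  fixes a b N :: int
  assumes N: "0 < N" "int k \<le> N"
  shows "(\<exists>t. t < k \<and> (a + int t) mod N = b mod N) \<longleftrightarrow> (b - a) mod N < int k"
proof -
  have iff: "(a + int t) mod N = b mod N \<longleftrightarrow> int t = (b - a) mod N" if "t < k" for t
    using add_mod_eq_iff[of "b mod N" N "int t" a] that N by (simp add: mod_diff_left_eq)
  show ?thesis
  proof
    assume "\<exists>t. t < k \<and> (a + int t) mod N = b mod N"
    then show "(b - a) mod N < int k" using iff by force
  next
    assume small: "(b - a) mod N < int k"
    define t where "t = nat ((b - a) mod N)"
    have t: "int t = (b - a) mod N" unfolding t_def using N by simp
    then have "t < k" using small by linarith
    then show "\<exists>t. t < k \<and> (a + int t) mod N = b mod N" using iff t by blast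
  qed
qed

lemma Amat_eq_window:
  assumes l: "l \<ge> 1" and r: "r \<in> {1..l}" and s: "s \<in> {1..l}"
  shows "Amat l i r s = (if (pos_num l r s - int i) mod (int l ^ 2) < int l - 1 then 1 else 0)"
proof -
  have "l - 1 \<le> l ^ 2" by (simp add: power2_eq_square le_square order.trans[OF diff_le_self])
  then have "int (l - 1) \<le> int l ^ 2" by (metis of_nat_le_iff of_nat_power)
  then have "(\<exists>t. t < l - 1 \<and> (int i + int t) mod (int l ^ 2) = pos_num l r s mod (int l ^ 2))
      \<longleftrightarrow> (pos_num l r s - int i) mod (int l ^ 2) < int l - 1"
    using ex_shift_mod_iff[of "int l ^ 2" "l - 1"] l by (simp add: of_nat_diff)
  moreover have "t + 1 < l \<longleftrightarrow> t < l - 1" for t by linarith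
  ultimately show ?thesis unfolding Amat_def using r s by simp
qed

section \<open>Window sums\<close>

lemma shift_invariant_multiple:
  fixes f :: "int \<Rightarrow> 'a"
  assumes "\<And>q. f (q + d) = f q"
  shows "f (q + m * d) = f q"
proof (induction m rule: int_induct[of _ 0])
  case (step1 m)
  then show ?case using assms[of "q + m * d"] by (simp add: algebra_simps)
next
  case (step2 m)
  then show ?case using assms[of "q + (m - 1) * d"] by (simp add: algebra_simps)
qed simp

lemma shift_invariant_coprime_const:
  fixes f :: "int \<Rightarrow> 'a"
  assumes "\<And>q. f (q + a) = f q" "\<And>q. f (q + b) = f q" "coprime a b"
  shows "f p = f q"
proof -
  obtain u v where uv: "u * a + v * b = 1" using bezout_int[of a b] assms(3) by auto
  have "(p - q) * (u * a + v * b) = p - q" using uv by simp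
  then have "p = (q + ((p - q) * u) * a) + ((p - q) * v) * b" by (simp add: algebra_simps)
  also have "f \<dots> = f q"
    using shift_invariant_multiple[of f, OF assms(2)] shift_invariant_multiple[of f, OF assms(1)] by simp
  finally show ?thesis .
qed

lemma shift_invariant_if_window_sums_eq:
  fixes f :: "int \<Rightarrow> 'a :: ab_group_add"
  assumes "\<And>q. (\<Sum>t<k. f (q - int t)) = c"
  shows "f (q + int k) = f q"
proof -
  have "(\<Sum>t<Suc k. f (q + int k - int t)) = f (q + int k) + (\<Sum>t<k. f (q + int k - 1 - int t))"
    unfolding sum.lessThan_Suc_shift by (simp add: algebra_simps)
  moreover have "(\<Sum>t<Suc k. f (q + int k - int t)) = (\<Sum>t<k. f (q + int k - int t)) + f q"
    by simp
  ultimately show ?thesis using assms[of "q + int k"] assms[of "q + int k - 1"] by simp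
qed

definition cyclic_index :: "nat \<Rightarrow> int \<Rightarrow> nat" where
  "cyclic_index N q = nat ((q - 1) mod int N) + 1"

lemma cyclic_index_bounds:
  assumes "N \<ge> 1" shows "cyclic_index N q \<in> {1..N}"
proof -
  have "0 \<le> (q - 1) mod int N" "(q - 1) mod int N < int N" using assms by simp_all
  then show ?thesis unfolding cyclic_index_def by (simp add: nat_less_iff)
qed

lemma cyclic_index_of_nat:
  assumes "i \<in> {1..N}" shows "cyclic_index N (int i) = i"
proof -
  have "(int i - 1) mod int N = int i - 1" using assms by (simp add: mod_pos_pos_trivial)
  then show ?thesis unfolding cyclic_index_def using assms by (simp add: nat_diff_distrib)
qed

lemma cyclic_index_mod_cong:
  assumes "q mod int N = q' mod int N" shows "cyclic_index N q = cyclic_index N q'"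
proof -
  have "(q - 1) mod int N = (q' - 1) mod int N"
    using assms mod_diff_left_eq[of q "int N" 1] mod_diff_left_eq[of q' "int N" 1] by simp
  then show ?thesis unfolding cyclic_index_def by simp
qed

lemma int_cyclic_index_mod:
  assumes "N \<ge> 1" shows "int (cyclic_index N q) mod int N = q mod int N"
proof -
  have "int (cyclic_index N q) = (q - 1) mod int N + 1" unfolding cyclic_index_def using assms by simp
  then show ?thesis using mod_add_left_eq[of "q - 1" "int N" 1] by simp
qed

lemma sum_window_reindex:
  fixes a :: "nat \<Rightarrow> 'a :: comm_monoid_add"
  assumes N: "N \<ge> 1" and k: "k \<le> N"
  shows "(\<Sum>i=1..N. if (q - int i) mod int N < int k then a i else 0)
    = (\<Sum>t<k. a (cyclic_index N (q - int t)))"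
proof -
  have "(\<Sum>i=1..N. if (q - int i) mod int N < int k then a i else 0)
      = (\<Sum>t<N. if t < k then a (cyclic_index N (q - int t)) else 0)"
  proof (rule sum.reindex_bij_witness[of _ "\<lambda>t. cyclic_index N (q - int t)" "\<lambda>i. nat ((q - int i) mod int N)"])
    fix i assume i: "i \<in> {1..N}"
    have "(q - ((q - int i) mod int N)) mod int N = int i mod int N"
      by (metis add_diff_cancel_left' diff_add_cancel mod_diff_right_eq)
    then show left_inv: "cyclic_index N (q - int (nat ((q - int i) mod int N))) = i"
      using cyclic_index_mod_cong[of _ N "int i"] cyclic_index_of_nat[OF i] N by simp
    show "nat ((q - int i) mod int N) \<in> {..<N}" using N by (simp add: nat_less_iff)
    show "(if nat ((q - int i) mod int N) < k then a (cyclic_index N (q - int (nat ((q - int i) mod int N)))) else 0)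
        = (if (q - int i) mod int N < int k then a i else 0)"
      using left_inv N by (simp add: nat_less_iff)
  next
    fix t assume t: "t \<in> {..<N}"
    show "cyclic_index N (q - int t) \<in> {1..N}" using cyclic_index_bounds[OF N] .
    have "(q - int (cyclic_index N (q - int t))) mod int N = (q - (q - int t)) mod int N"
      using int_cyclic_index_mod[OF N] by (metis mod_diff_right_eq)
    then show "nat ((q - int (cyclic_index N (q - int t))) mod int N) = t" using t by simp
  qed
  also have "\<dots> = (\<Sum>t<k. a (cyclic_index N (q - int t)))"
    using k by (intro sum.mono_neutral_cong_right) auto
  finally show ?thesis .
qed

lemma Amat_combination_window_sums:
  fixes a :: "nat \<Rightarrow> real"
  assumes l: "l \<ge> 1"
    and comb: "\<forall>r\<in>{1..l}. \<forall>s\<in>{1..l}. (\<Sum>i=1..l^2. a i * Amat l i r s) = 0"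
  shows "(\<Sum>t<l-1. a (cyclic_index (l^2) (q - int t))) = 0"
proof -
  have N: "l^2 \<ge> 1" "l - 1 \<le> l^2"
    using l by (simp_all add: power2_eq_square le_square order.trans[OF diff_le_self])
  obtain r s where r: "r \<in> {1..l}" and s: "s \<in> {1..l}"
    and pos: "pos_num l r s mod (int l ^ 2) = q mod (int l ^ 2)"
    using pos_num_surj[OF l] by blast
  have "(\<Sum>t<l-1. a (cyclic_index (l^2) (q - int t)))
      = (\<Sum>i=1..l^2. if (q - int i) mod int (l^2) < int (l - 1) then a i else 0)"
    by (rule sum_window_reindex[OF N, symmetric])
  also have "\<dots> = (\<Sum>i=1..l^2. a i * Amat l i r s)"
  proof (rule sum.cong)
    fix i
    have "(pos_num l r s - int i) mod (int l ^ 2) = (q - int i) mod (int l ^ 2)"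
      using pos mod_diff_left_eq[of "pos_num l r s" "int l ^ 2" "int i"]
        mod_diff_left_eq[of q "int l ^ 2" "int i"] by simp
    then show "(if (q - int i) mod int (l^2) < int (l - 1) then a i else 0) = a i * Amat l i r s"
      using Amat_eq_window[OF l r s, of i] l by (simp add: of_nat_diff)
  qed simp
  also have "\<dots> = 0" using comb r s by blast
  finally show ?thesis .
qed

lemma Amat_combination_eq_0:
  fixes a :: "nat \<Rightarrow> real"
  assumes l: "l \<ge> 1"
    and comb: "\<forall>r\<in>{1..l}. \<forall>s\<in>{1..l}. (\<Sum>i=1..l^2. a i * Amat l i r s) = 0"
    and total: "(\<Sum>i=1..l^2. a i) = 0"
  shows "\<forall>i\<in>{1..l^2}. a i = 0"
proof -
  define f where "f q = a (cyclic_index (l^2) q)" for q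
  have shift: "f (q + int (l - 1)) = f q" for q
    unfolding f_def
    by (rule shift_invariant_if_window_sums_eq[where f = "\<lambda>q. a (cyclic_index (l^2) q)" and c = 0])
      (rule Amat_combination_window_sums[OF l comb])
  have period: "f (q + int (l^2)) = f q" for q
    unfolding f_def using cyclic_index_mod_cong[of "q + int (l^2)" "l^2" q] by simp
  have "coprime (int l - 1) (int l ^ 2)" by simp
  then have "coprime (int (l - 1)) (int (l^2))" using l by (simp add: of_nat_diff)
  then have const: "f q = f 1" for q using shift_invariant_coprime_const[of f, OF shift period] by blast
  have a_eq: "a i = f 1" if "i \<in> {1..l^2}" for i
    using const[of "int i"] cyclic_index_of_nat[OF that] unfolding f_def by simp
  then have "real (l^2) * f 1 = 0" using total by simp
  then show ?thesis using a_eq l by simp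
qed

section \<open>Permutation matrices\<close>

lemma sum_atLeast1_atMost_split: "(n::nat) \<ge> 1 \<Longrightarrow> (\<Sum>k=1..n. f k) = f 1 + (\<Sum>k=2..n. f k)"
  by (simp add: sum.atLeast_Suc_atMost numeral_2_eq_2)

lemma perm_matrix_row_sum:
  assumes "perm_matrix n M" "r \<in> {1..n}"
  shows "(\<Sum>s=1..n. M r s) = 1"
proof -
  obtain \<sigma> where \<sigma>: "bij_betw \<sigma> {1..n} {1..n}" "\<And>r s. M r s = (if r \<in> {1..n} \<and> s = \<sigma> r then 1 else 0)"
    using assms(1) unfolding perm_matrix_def by blast
  have "\<sigma> r \<in> {1..n}" using bij_betw_apply[OF \<sigma>(1) assms(2)] .
  then show ?thesis using assms(2) by (simp add: \<sigma>(2) sum.delta')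
qed

lemma perm_matrix_column_sum:
  assumes "perm_matrix n M" "s \<in> {1..n}"
  shows "(\<Sum>r=1..n. M r s) = 1"
proof -
  obtain \<sigma> where \<sigma>: "bij_betw \<sigma> {1..n} {1..n}" "\<And>r s. M r s = (if r \<in> {1..n} \<and> s = \<sigma> r then 1 else 0)"
    using assms(1) unfolding perm_matrix_def by blast
  have "(\<Sum>r=1..n. M r s) = (\<Sum>r\<in>{1..n}. (\<lambda>x. if x = s then 1 else 0) (\<sigma> r))"
    by (intro sum.cong) (auto simp: \<sigma>(2))
  also have "\<dots> = (\<Sum>x\<in>{1..n}. if x = s then 1 else 0)" by (rule sum.reindex_bij_betw[OF \<sigma>(1)])
  also have "\<dots> = 1" using assms(2) by simp
  finally show ?thesis .
qed

lemma perm_matrix_in_Gamma: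
  assumes "perm_matrix n M" shows "M \<in> Gamma n"
proof -
  obtain \<sigma> where \<sigma>: "bij_betw \<sigma> {1..n} {1..n}" "\<And>r s. M r s = (if r \<in> {1..n} \<and> s = \<sigma> r then 1 else 0)"
    using assms unfolding perm_matrix_def by blast
  have "is_matrix n M" unfolding is_matrix_def \<sigma>(2) using bij_betw_apply[OF \<sigma>(1)] by fastforce
  then show ?thesis unfolding Gamma_def stochastic_def using perm_matrix_row_sum[OF assms] by (simp add: \<sigma>(2))
qed

lemma matrix_eq_if_minor_and_line_sums_eq:
  fixes M M' :: "nat \<Rightarrow> nat \<Rightarrow> real"
  assumes mat: "is_matrix n M" "is_matrix n M'"
    and rows: "\<And>r. r \<in> {1..n} \<Longrightarrow> (\<Sum>s=1..n. M r s) = (\<Sum>s=1..n. M' r s)"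
    and cols: "\<And>s. s \<in> {1..n} \<Longrightarrow> (\<Sum>r=1..n. M r s) = (\<Sum>r=1..n. M' r s)"
    and minor: "\<And>r s. r \<in> {2..n} \<Longrightarrow> s \<in> {2..n} \<Longrightarrow> M r s = M' r s"
  shows "M = M'"
proof (intro ext)
  fix r s
  have col1: "M r 1 = M' r 1" if r: "r \<in> {2..n}" for r
  proof -
    have "(\<Sum>k=2..n. M r k) = (\<Sum>k=2..n. M' r k)" using minor[OF r] by simp
    then show ?thesis
      using rows[of r] r sum_atLeast1_atMost_split[of n "M r"] sum_atLeast1_atMost_split[of n "M' r"] by simp
  qed
  have row1: "M 1 s = M' 1 s" if s: "s \<in> {2..n}" for s
  proof -
    have "(\<Sum>k=2..n. M k s) = (\<Sum>k=2..n. M' k s)" using minor[OF _ s] by simp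
    then show ?thesis
      using cols[of s] s sum_atLeast1_atMost_split[of n "\<lambda>k. M k s"]
        sum_atLeast1_atMost_split[of n "\<lambda>k. M' k s"] by simp
  qed
  have corner: "M 1 1 = M' 1 1" if n: "n \<ge> 1"
  proof -
    have "(\<Sum>k=2..n. M 1 k) = (\<Sum>k=2..n. M' 1 k)" using row1 by simp
    then show ?thesis
      using rows[of 1] n sum_atLeast1_atMost_split[of n "M 1"] sum_atLeast1_atMost_split[of n "M' 1"] by simp
  qed
  show "M r s = M' r s"
  proof (cases "r \<in> {1..n} \<and> s \<in> {1..n}")
    case False
    then show ?thesis using mat unfolding is_matrix_def by simp
  next
    case True
    then consider "r = 1" "s = 1" | "r \<in> {2..n}" "s = 1" | "r = 1" "s \<in> {2..n}"
      | "r \<in> {2..n}" "s \<in> {2..n}" by force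
    then show ?thesis using corner col1 row1 minor True by cases auto
  qed
qed

lemma perm_matrix_eq_if_minor_eq:
  assumes "perm_matrix n M" "perm_matrix n M'"
    and "\<And>r s. r \<in> {2..n} \<Longrightarrow> s \<in> {2..n} \<Longrightarrow> M r s = M' r s"
  shows "M = M'"
  using assms perm_matrix_in_Gamma[OF assms(1)] perm_matrix_in_Gamma[OF assms(2)]
    perm_matrix_row_sum perm_matrix_column_sum
  by (intro matrix_eq_if_minor_and_line_sums_eq) (auto simp: Gamma_def stochastic_def)

lemma perm_matrix_corner_eq_0:
  assumes "perm_matrix n M" and r0: "r0 \<in> {2..n}" and zero_row: "\<And>s. s \<in> {2..n} \<Longrightarrow> M r0 s = 0"
  shows "M 1 1 = 0"
proof -
  obtain \<sigma> where \<sigma>: "bij_betw \<sigma> {1..n} {1..n}" "\<And>r s. M r s = (if r \<in> {1..n} \<and> s = \<sigma> r then 1 else 0)"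
    using assms(1) unfolding perm_matrix_def by blast
  have "\<sigma> r0 \<in> {1..n}" using bij_betw_apply[OF \<sigma>(1)] r0 by simp
  then have "\<sigma> r0 = 1" using zero_row[of "\<sigma> r0"] r0 by (force simp: \<sigma>(2))
  moreover have "\<sigma> 1 = \<sigma> r0 \<Longrightarrow> 1 = r0"
    using inj_onD[OF bij_betw_imp_inj_on[OF \<sigma>(1)]] r0 by simp
  ultimately have "\<sigma> 1 \<noteq> 1" using r0 by auto
  then show ?thesis by (simp add: \<sigma>(2))
qed

lemma perm_matrix_extend:
  assumes n: "n \<ge> 1" and inj: "inj_on f {2..n}" and img: "f ` {2..n} \<subseteq> {1..n}"
  shows "\<exists>M. perm_matrix n M \<and> (\<forall>r\<in>{2..n}. \<forall>s. M r s = (if s = f r then 1 else 0))"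
proof -
  have "card (f ` {2..n}) < card {1..n}" using card_image[OF inj] n by simp
  then have "f ` {2..n} \<noteq> {1..n}" by auto
  then obtain y where y: "y \<in> {1..n}" "y \<notin> f ` {2..n}" using img by blast
  define \<sigma> where "\<sigma> = f(1 := y)"
  have split: "{1..n} = insert 1 {2..n}" using n by auto
  have on_tail: "\<sigma> r = f r" if "r \<in> {2..n}" for r using that by (simp add: \<sigma>_def)
  have "inj_on \<sigma> {2..n}" using inj on_tail by (simp add: inj_on_def)
  moreover have "\<sigma> 1 \<notin> \<sigma> ` {2..n}" using y on_tail by (simp add: \<sigma>_def image_iff)
  ultimately have inj\<sigma>: "inj_on \<sigma> {1..n}" unfolding split by simp
  have img\<sigma>: "\<sigma> ` {1..n} \<subseteq> {1..n}" using img y on_tail unfolding split by (auto simp: \<sigma>_def)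
  have "bij_betw \<sigma> {1..n} {1..n}" using inj\<sigma> img\<sigma> by (simp add: bij_betw_def endo_inj_surj)
  then have "perm_matrix n (\<lambda>r s. if r \<in> {1..n} \<and> s = \<sigma> r then 1 else 0)"
    unfolding perm_matrix_def by blast
  moreover have "\<forall>r\<in>{2..n}. \<forall>s. (if r \<in> {1..n} \<and> s = \<sigma> r then 1 else 0) = (if s = f r then 1 else (0::real))"
    by (auto simp: \<sigma>_def)
  ultimately show ?thesis by blast
qed

section \<open>The matrices P_i and C_j\<close>

lemma Pmat_spec:
  assumes n: "n \<ge> 2"
  shows "perm_matrix n (Pmat n i) \<and> (\<forall>r\<in>{1..n-1}. \<forall>s\<in>{1..n-1}. Pmat n i (r+1) (s+1) = Amat (n-1) i r s)"
proof -
  have l: "n - 1 \<ge> 1" "n - 1 + 1 = n" using n by auto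
  let ?spec = "\<lambda>M. perm_matrix n M \<and> (\<forall>r\<in>{1..n-1}. \<forall>s\<in>{1..n-1}. M (r+1) (s+1) = Amat (n-1) i r s)"
  have minor_eq: "M r s = Amat (n-1) i (r-1) (s-1)" if "?spec M" "r \<in> {2..n}" "s \<in> {2..n}" for M r s
  proof -
    have "r - 1 \<in> {1..n-1}" "r - 1 + 1 = r" "s - 1 \<in> {1..n-1}" "s - 1 + 1 = s" using that(2,3) by auto
    then show ?thesis using that(1) by metis
  qed
  obtain f where f: "inj_on f {2..n}" "f ` {2..n} \<subseteq> {1..n}"
    "\<forall>r\<in>{1..n-1}. \<forall>s\<in>{1..n-1}. Amat (n-1) i r s = (if f (r + 1) = s + 1 then 1 else 0)"
    using Amat_partial_perm[OF l(1), of i] unfolding l(2) by blast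
  obtain M where M: "perm_matrix n M" "\<forall>r\<in>{2..n}. \<forall>s. M r s = (if s = f r then 1 else 0)"
    using perm_matrix_extend[OF _ f(1,2)] n by auto
  have "?spec M" using M f(3) by auto
  moreover have "M' = M" if "?spec M'" for M'
  proof (rule perm_matrix_eq_if_minor_eq)
    show "perm_matrix n M'" "perm_matrix n M" using that \<open>?spec M\<close> by simp_all
    show "M' r s = M r s" if "r \<in> {2..n}" "s \<in> {2..n}" for r s
      using minor_eq[OF \<open>?spec M'\<close> that] minor_eq[OF \<open>?spec M\<close> that] by simp
  qed
  ultimately show ?thesis unfolding Pmat_def by (rule theI)
qed

lemma Pmat_corner:
  assumes n: "n \<ge> 2" shows "Pmat n i 1 1 = 0"
proof -
  obtain r where r: "r \<in> {1..n-1}" "\<forall>s\<in>{1..n-1}. Amat (n-1) i r s = 0"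
    using Amat_zero_row[of "n - 1" i] n by force
  have "Pmat n i (r + 1) s = 0" if s: "s \<in> {2..n}" for s
  proof -
    have "s - 1 \<in> {1..n-1}" "s - 1 + 1 = s" using s by auto
    then show ?thesis using Pmat_spec[OF n] r by metis
  qed
  then show ?thesis using perm_matrix_corner_eq_0[of n "Pmat n i" "r + 1"] Pmat_spec[OF n] r by auto
qed

lemma two_le_if_mem_Pmat_indices: "i \<in> {1..(n-1)^2} \<Longrightarrow> 2 \<le> (n::nat)"
  by (cases "n \<le> 1") auto

lemma Pmat_in_Gamma: "n \<ge> 2 \<Longrightarrow> Pmat n i \<in> Gamma n"
  using Pmat_spec perm_matrix_in_Gamma by blast

lemma Cmat_in_Gamma: "j \<in> {1..n} \<Longrightarrow> Cmat n j \<in> Gamma n"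
  unfolding Gamma_def stochastic_def is_matrix_def Cmat_def by simp

lemma Cmat_column_sum: "(\<Sum>r=1..n. Cmat n j r s) = (if s = j then real n else 0)"
  unfolding Cmat_def by simp

lemma Pmat_Cmat_combination_eq_0:
  fixes a b :: "nat \<Rightarrow> real"
  assumes n: "n \<ge> 1"
    and comb: "\<forall>r s. (\<Sum>i=1..(n-1)^2. a i * Pmat n i r s) + (\<Sum>j=1..n. b j * Cmat n j r s) = 0"
  shows "(\<forall>i\<in>{1..(n-1)^2}. a i = 0) \<and> (\<forall>j\<in>{1..n}. b j = 0)"
proof -
  have column: "(\<Sum>i=1..(n-1)^2. a i) + real n * b s = 0" if s: "s \<in> {1..n}" for s
  proof -
    have "0 = (\<Sum>r=1..n. (\<Sum>i=1..(n-1)^2. a i * Pmat n i r s) + (\<Sum>j=1..n. b j * Cmat n j r s))"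
      using comb by simp
    also have "\<dots> = (\<Sum>i=1..(n-1)^2. a i * (\<Sum>r=1..n. Pmat n i r s)) + (\<Sum>j=1..n. b j * (\<Sum>r=1..n. Cmat n j r s))"
      unfolding sum.distrib sum_distrib_left by (subst (1 2) sum.swap) (rule refl)
    also have "\<dots> = (\<Sum>i=1..(n-1)^2. a i) + (\<Sum>j=1..n. b j * (if s = j then real n else 0))"
      using perm_matrix_column_sum[OF conjunct1[OF Pmat_spec[OF two_le_if_mem_Pmat_indices]] s] by (simp only: Cmat_column_sum) simp
    also have "\<dots> = (\<Sum>i=1..(n-1)^2. a i) + real n * b s"
      using s by (simp add: if_distrib sum.delta cong: if_cong)
    finally show ?thesis by simp
  qed
  have "(\<Sum>i=1..(n-1)^2. a i * Pmat n i 1 1) = 0" using Pmat_corner[OF two_le_if_mem_Pmat_indices] by simp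
  moreover have "(\<Sum>j=1..n. b j * Cmat n j 1 1) = b 1" using n by (simp add: Cmat_def if_distrib sum.delta cong: if_cong)
  ultimately have "b 1 = 0" using comb[rule_format, of 1 1] by simp
  then have total: "(\<Sum>i=1..(n-1)^2. a i) = 0" using column[of 1] n by simp
  then have b: "\<forall>j\<in>{1..n}. b j = 0" using column n by simp
  have "\<forall>i\<in>{1..(n-1)^2}. a i = 0"
  proof (cases "n = 1")
    case False
    then have l: "n - 1 \<ge> 1" and n2: "n \<ge> 2" using n by auto
    have "(\<Sum>i=1..(n-1)^2. a i * Amat (n-1) i r s) = 0" if "r \<in> {1..n-1}" "s \<in> {1..n-1}" for r s
      using comb[rule_format, of "r + 1" "s + 1"] b Pmat_spec[OF n2] that by simp
    then show ?thesis using Amat_combination_eq_0[OF l _ total] by blast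
  qed simp
  with b show ?thesis by blast
qed

section \<open>Spanning by dimension count\<close>

context vector_space
begin

lemma independent_image_if_coeffs_eq_0:
  assumes I: "finite I" and coeffs: "\<And>c. (\<Sum>i\<in>I. c i *s v i) = 0 \<Longrightarrow> \<forall>i\<in>I. c i = 0"
  shows "inj_on v I \<and> independent (v ` I)"
proof
  show inj: "inj_on v I"
  proof (rule inj_onI, rule ccontr)
    fix i j assume ij: "i \<in> I" "j \<in> I" "v i = v j" "i \<noteq> j"
    define c :: "_ \<Rightarrow> 'a" where "c k = (if k = i then 1 else if k = j then - 1 else 0)" for k
    have "(\<Sum>k\<in>I. c k *s v k) = (\<Sum>k\<in>I. (if k = i then v k else 0) - (if k = j then v k else 0))"
      using ij by (intro sum.cong) (auto simp: c_def)
    also have "\<dots> = 0" using I ij by (simp add: sum_subtractf)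
    finally show False using coeffs[of c] ij by (auto simp: c_def)
  qed
  show "independent (v ` I)"
  proof
    assume "dependent (v ` I)"
    then obtain u where u: "\<exists>x\<in>v ` I. u x \<noteq> 0" "(\<Sum>x\<in>v ` I. u x *s x) = 0"
      using dependent_finite[of "v ` I"] I by auto
    then have "(\<Sum>i\<in>I. u (v i) *s v i) = 0" by (simp add: sum.reindex[OF inj])
    then show False using coeffs[of "u \<circ> v"] u(1) by auto
  qed
qed

lemma span_subset_span_if_independent_card_ge:
  assumes B: "finite B" and F: "independent F" "F \<subseteq> span B" and card: "card B \<le> card F"
  shows "span B \<subseteq> span F"
proof
  fix x assume x: "x \<in> span B"
  show "x \<in> span F"
  proof (rule ccontr)
    assume "x \<notin> span F"
    then have "independent (insert x F)" "x \<notin> F" using F(1) independent_insertI span_base by auto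
    moreover have "insert x F \<subseteq> span B" using x F(2) by simp
    ultimately have "finite F" "card (insert x F) \<le> card B"
      using independent_span_bound[OF B] by (meson finite_insert)+
    then show False using card \<open>x \<notin> F\<close> by simp
  qed
qed

lemma in_span_image_imp_combination:
  assumes "finite I" "inj_on v I" "x \<in> span (v ` I)"
  shows "\<exists>c. x = (\<Sum>i\<in>I. c i *s v i)"
proof -
  obtain u where "x = (\<Sum>y\<in>v ` I. u y *s y)" using assms(3) span_finite[of "v ` I"] assms(1) by auto
  then have "x = (\<Sum>i\<in>I. u (v i) *s v i)" by (simp add: sum.reindex[OF assms(2)])
  then show ?thesis by (intro exI[of _ "u \<circ> v"]) simp
qed

end

lemma sum_fun_apply: "(\<Sum>p\<in>A. g p) x = (\<Sum>p\<in>A. g p x)"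
  by (induction A rule: infinite_finite_induct) auto

definition mat_scale :: "real \<Rightarrow> (nat \<Rightarrow> nat \<Rightarrow> real) \<Rightarrow> nat \<Rightarrow> nat \<Rightarrow> real" where
  "mat_scale c M = (\<lambda>r s. c * M r s)"

interpretation mat: vector_space mat_scale
  by unfold_locales (auto simp: mat_scale_def fun_eq_iff algebra_simps)

definition unit_mat :: "nat \<Rightarrow> nat \<Rightarrow> nat \<Rightarrow> nat \<Rightarrow> real" where
  "unit_mat r s = (\<lambda>x y. if x = r \<and> y = s then 1 else 0)"

(* Spans all matrices with equal row sums, bounding the dimension of the span of Gamma n. *)
definition row_sums_spanning_set :: "nat \<Rightarrow> (nat \<Rightarrow> nat \<Rightarrow> real) set" where
  "row_sums_spanning_set n =
     insert (Cmat n 1) ((\<lambda>(r, s). unit_mat r s - unit_mat r 1) ` ({1..n} \<times> {2..n}))"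

lemma finite_row_sums_spanning_set: "finite (row_sums_spanning_set n)"
  unfolding row_sums_spanning_set_def by simp

lemma card_row_sums_spanning_set_le: "card (row_sums_spanning_set n) \<le> n^2 - n + 1"
proof -
  let ?D = "(\<lambda>(r, s). unit_mat r s - unit_mat r 1) ` ({1..n} \<times> {2..n})"
  have "card ?D \<le> card ({1..n} \<times> {2..n})" by (rule card_image_le) simp
  moreover have "card (row_sums_spanning_set n) \<le> card ?D + 1"
    unfolding row_sums_spanning_set_def by (simp add: card_insert_if)
  moreover have "card ({1..n} \<times> {2..n}) + 1 = n^2 - n + 1"
    by (simp add: power2_eq_square algebra_simps)
  ultimately show ?thesis by linarith
qed

lemma Gamma_row_sums_decomposition:
  assumes "S \<in> Gamma n"
  shows "S = Cmat n 1 + (\<Sum>r\<in>{1..n}. \<Sum>s\<in>{2..n}. mat_scale (S r s) (unit_mat r s - unit_mat r 1))"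
    (is "S = ?T")
proof (intro ext)
  fix x y
  have mat: "is_matrix n S" and rows: "\<And>x. x \<in> {1..n} \<Longrightarrow> (\<Sum>y=1..n. S x y) = 1"
    using assms unfolding Gamma_def stochastic_def by auto
  show "S x y = ?T x y"
  proof (cases "x \<in> {1..n}")
    case False
    then have "(\<Sum>r\<in>{1..n}. \<Sum>s\<in>{2..n}. mat_scale (S r s) (unit_mat r s - unit_mat r 1)) x y = 0"
      by (auto simp: sum_fun_apply mat_scale_def unit_mat_def intro!: sum.neutral)
    then show ?thesis using mat False by (auto simp: is_matrix_def Cmat_def)
  next
    case x: True
    define F where "F s = (if s = y then S x s else 0) - (if y = 1 then S x s else 0)" for s
    have entry: "mat_scale (S r s) (unit_mat r s - unit_mat r 1) x y = (if r = x then F s else 0)" for r s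
      by (simp add: F_def mat_scale_def unit_mat_def)
    have "?T x y = Cmat n 1 x y + (\<Sum>r\<in>{1..n}. \<Sum>s\<in>{2..n}. if r = x then F s else 0)"
      by (simp only: plus_fun_apply sum_fun_apply entry)
    also have "(\<Sum>r\<in>{1..n}. \<Sum>s\<in>{2..n}. if r = x then F s else 0) = (\<Sum>s\<in>{2..n}. F s)"
      using x by (subst sum.swap) simp
    also have "(\<Sum>s\<in>{2..n}. F s) = (if y \<in> {2..n} then S x y else 0) - (if y = 1 then (\<Sum>s\<in>{2..n}. S x s) else 0)"
      by (simp add: F_def sum_subtractf)
    also have "Cmat n 1 x y + \<dots> = S x y"
    proof -
      have "n \<ge> 1" using x by simp
      then have "S x 1 + (\<Sum>s\<in>{2..n}. S x s) = 1" using rows[OF x] sum_atLeast1_atMost_split[of n "S x"] by simp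
      moreover have "y \<notin> {1..n} \<Longrightarrow> S x y = 0" using mat unfolding is_matrix_def by blast
      ultimately show ?thesis using x by (auto simp: Cmat_def)
    qed
    finally show ?thesis by (rule sym)
  qed
qed

lemma Gamma_subset_span_row_sums_spanning_set: "Gamma n \<subseteq> mat.span (row_sums_spanning_set n)"
proof
  fix S assume "S \<in> Gamma n"
  then have "S = Cmat n 1 + (\<Sum>r\<in>{1..n}. \<Sum>s\<in>{2..n}. mat_scale (S r s) (unit_mat r s - unit_mat r 1))"
    by (rule Gamma_row_sums_decomposition)
  also have "\<dots> \<in> mat.span (row_sums_spanning_set n)"
    by (intro mat.span_add mat.span_sum mat.span_scale mat.span_base)
      (auto simp: row_sums_spanning_set_def)
  finally show "S \<in> mat.span (row_sums_spanning_set n)" .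
qed

lemma Pmat_Cmat_family_apply:
  "(\<Sum>k\<in>{1..(n-1)^2} <+> {1..n}. mat_scale (c k) (case_sum (Pmat n) (Cmat n) k)) r s
    = (\<Sum>i=1..(n-1)^2. c (Inl i) * Pmat n i r s) + (\<Sum>j=1..n. c (Inr j) * Cmat n j r s)"
  by (simp add: sum_fun_apply sum.Plus mat_scale_def)

lemma Pmat_Cmat_family_independent:
  assumes n: "n \<ge> 1"
  shows "inj_on (case_sum (Pmat n) (Cmat n)) ({1..(n-1)^2} <+> {1..n})
    \<and> mat.independent (case_sum (Pmat n) (Cmat n) ` ({1..(n-1)^2} <+> {1..n}))"
proof (rule mat.independent_image_if_coeffs_eq_0)
  fix c assume zero: "(\<Sum>k\<in>{1..(n-1)^2} <+> {1..n}. mat_scale (c k) (case_sum (Pmat n) (Cmat n) k)) = 0"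
  have "(\<Sum>k\<in>{1..(n-1)^2} <+> {1..n}. mat_scale (c k) (case_sum (Pmat n) (Cmat n) k)) r s = 0" for r s
    by (simp only: zero zero_fun_apply)
  then have "\<forall>r s. (\<Sum>i=1..(n-1)^2. c (Inl i) * Pmat n i r s) + (\<Sum>j=1..n. c (Inr j) * Cmat n j r s) = 0"
    unfolding Pmat_Cmat_family_apply by blast
  then have "(\<forall>i\<in>{1..(n-1)^2}. c (Inl i) = 0) \<and> (\<forall>j\<in>{1..n}. c (Inr j) = 0)"
    using Pmat_Cmat_combination_eq_0[OF n, of "\<lambda>i. c (Inl i)" "\<lambda>j. c (Inr j)"] by blast
  then show "\<forall>k\<in>{1..(n-1)^2} <+> {1..n}. c k = 0" by blast
qed simp

lemma Pmat_Cmat_family_image: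
  "case_sum (Pmat n) (Cmat n) ` ({1..(n-1)^2} <+> {1..n}) = Pmat n ` {1..(n-1)^2} \<union> Cmat n ` {1..n}"
  unfolding Plus_def image_Un image_image by simp

lemma card_Pmat_Cmat:
  assumes n: "n \<ge> 1"
  shows "card (Pmat n ` {1..(n-1)^2} \<union> Cmat n ` {1..n}) = n^2 - n + 1"
proof -
  have "card (Pmat n ` {1..(n-1)^2} \<union> Cmat n ` {1..n}) = (n-1)^2 + n"
    using card_image[OF conjunct1[OF Pmat_Cmat_family_independent[OF n]]]
    unfolding Pmat_Cmat_family_image by (simp add: card_Plus)
  also have "\<dots> = n^2 - n + 1" using n by (cases n) (simp_all add: power2_eq_square)
  finally show ?thesis .
qed

lemma Gamma_subset_span_Pmat_Cmat:
  assumes n: "n \<ge> 1"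
  shows "Gamma n \<subseteq> mat.span (Pmat n ` {1..(n-1)^2} \<union> Cmat n ` {1..n})"
proof -
  let ?F = "Pmat n ` {1..(n-1)^2} \<union> Cmat n ` {1..n}"
  have "?F \<subseteq> Gamma n" using Pmat_in_Gamma[OF two_le_if_mem_Pmat_indices] Cmat_in_Gamma by auto
  then have "?F \<subseteq> mat.span (row_sums_spanning_set n)"
    using Gamma_subset_span_row_sums_spanning_set by (rule order.trans)
  then have "mat.span (row_sums_spanning_set n) \<subseteq> mat.span ?F"
    using mat.span_subset_span_if_independent_card_ge[OF finite_row_sums_spanning_set]
      Pmat_Cmat_family_independent[OF n] card_Pmat_Cmat[OF n] card_row_sums_spanning_set_le
    unfolding Pmat_Cmat_family_image by simp
  then show ?thesis using Gamma_subset_span_row_sums_spanning_set by blast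
qed

lemma Gamma_Pmat_Cmat_combination:
  assumes n: "n \<ge> 1" and S: "S \<in> Gamma n"
  shows "\<exists>a b. \<forall>r s. S r s = (\<Sum>i=1..(n-1)^2. a i * Pmat n i r s) + (\<Sum>j=1..n. b j * Cmat n j r s)"
proof -
  have "S \<in> mat.span (case_sum (Pmat n) (Cmat n) ` ({1..(n-1)^2} <+> {1..n}))"
    unfolding Pmat_Cmat_family_image using Gamma_subset_span_Pmat_Cmat[OF n] S ..
  then obtain c where c: "S = (\<Sum>k\<in>{1..(n-1)^2} <+> {1..n}. mat_scale (c k) (case_sum (Pmat n) (Cmat n) k))"
    using mat.in_span_image_imp_combination[OF _ conjunct1[OF Pmat_Cmat_family_independent[OF n]]]
    by (meson finite_Plus finite_atLeastAtMost)
  have "S r s = (\<Sum>i=1..(n-1)^2. c (Inl i) * Pmat n i r s) + (\<Sum>j=1..n. c (Inr j) * Cmat n j r s)" for r s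
    unfolding c Pmat_Cmat_family_apply ..
  then show ?thesis by (intro exI[of _ "\<lambda>i. c (Inl i)"] exI[of _ "\<lambda>j. c (Inr j)"]) blast
qed

theorem mainTheorem6:
  fixes n :: nat
  assumes "n \<ge> 1"
  shows "(\<forall>i\<in>{1..(n-1)^2}. Pmat n i \<in> Gamma n) \<and> (\<forall>j\<in>{1..n}. Cmat n j \<in> Gamma n)
    \<and> card (Pmat n ` {1..(n-1)^2} \<union> Cmat n ` {1..n}) = n^2 - n + 1
    \<and> (\<forall>a b :: nat \<Rightarrow> real.
          (\<forall>r s. (\<Sum>i=1..(n-1)^2. a i * Pmat n i r s) + (\<Sum>j=1..n. b j * Cmat n j r s) = 0)
          \<longrightarrow> (\<forall>i\<in>{1..(n-1)^2}. a i = 0) \<and> (\<forall>j\<in>{1..n}. b j = 0))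
    \<and> (\<forall>S\<in>Gamma n. \<exists>a b :: nat \<Rightarrow> real.
          \<forall>r s. S r s = (\<Sum>i=1..(n-1)^2. a i * Pmat n i r s) + (\<Sum>j=1..n. b j * Cmat n j r s))"
  using Pmat_in_Gamma[OF two_le_if_mem_Pmat_indices] Cmat_in_Gamma card_Pmat_Cmat[OF assms]
    Pmat_Cmat_combination_eq_0[OF assms] Gamma_Pmat_Cmat_combination[OF assms]
  by (intro conjI ballI allI impI) auto

end
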